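(* For every $r\ge1$, $C_{1,r}(a)=G_{1,r+1}(a)$, that is, \[ (-1)^r\sum_{(n_1,\dots,n_r)\in S_r}\frac{B_{n_1}(a)}{n_1!}\cdots\frac{B_{n_r}(a)}{n_r!}=(-1)^r\lambda_{r+1}(a), \] where $S_r=\{(n_1,\dots,n_r)\in\mathbb Z_{\ge0}^r: n_1+\dots+n_r=r,\ n_{j+1}+\dots+n_r\le r-j\ (1\le j<r)\}$.
   Context: Bernoulli polynomials $B_n(a)$: $\sum_{n\ge0}B_n(a)x^n/n!=xe^{ax}/(e^x-1)$. $C_{1,r}(a)$ denotes the left-hand side of the displayed identity. Let $L(a,t)=\sum_{n\ge1}\lambda_n(a)t^n\in\mathbb Q[a][[t]]$ be the compositional inverse (in $t$) of $e^{-at}(e^t-1)$, equivalently the unique such series with $e^{L(a,t)}(1-te^{(a-1)L(a,t)})=1$. The generalized Gregory polynomials $G_{m,n}(a)$ are defined by $\sum_{m,n\ge0}G_{m,n}(a)x^my^n=\dfrac{yL(a,-x)^2-xL(a,-y)^2}{-L(a,-x)+L(a,-y)}$. *)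

theory Defs
  imports "HOL-Computational_Algebra.Formal_Power_Series"
begin

definition bernpoly_egf :: "real \<Rightarrow> real fps" where
  "bernpoly_egf a = fps_X * fps_exp a / (fps_exp 1 - 1)"

definition bernpoly :: "nat \<Rightarrow> real \<Rightarrow> real" where
  "bernpoly n a = fact n * fps_nth (bernpoly_egf a) n"

definition gregL :: "real \<Rightarrow> real fps" where
  "gregL a = fps_inv (fps_exp (- a) * (fps_exp 1 - 1))"

definition lambda_coeff :: "nat \<Rightarrow> real \<Rightarrow> real" where
  "lambda_coeff n a = fps_nth (gregL a) n"

(* S_r, with (n_1,...,n_r) encoded as a list ns of length r, ns ! (j-1) = n_j;
   n_{j+1}+...+n_r = sum_list (drop j ns) *)
definition S_set :: "nat \<Rightarrow> nat list set" where
  "S_set r = {ns. length ns = r \<and> sum_list ns = r \<and>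
                 (\<forall>j. 1 \<le> j \<and> j < r \<longrightarrow> sum_list (drop j ns) \<le> r - j)}"

end

(*
  Since e^{-at}(e^t - 1) times the Bernoulli generating function f(t) = t e^{at}/(e^t - 1) is t,
  the compositional inverse L of e^{-at}(e^t - 1) satisfies L = t f(L). For any such fixpoint the
  coefficient of t^n in L^k is the sum, over the Lukasiewicz words of length n that code a forest
  of k plane trees, of the products of the coefficients of f indexed by the letters. The words
  coding one tree with r + 1 nodes are exactly the elements of S_r followed by a final 0, and
  f_0 = 1.
*)

theory Submission imports Defs begin

unbundle fps_syntax

lemma exp_times_exp_minus_one_times_bernpoly_egf:
  fixes a :: real
  shows "fps_exp (- a) * (fps_exp 1 - 1) * bernpoly_egf a = fps_X"
proof -
  let ?D = "fps_exp (1::real) - 1"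
  let ?N = "fps_X * fps_exp a :: real fps"
  have "?D \<noteq> 0" "subdegree ?D \<le> 1"
    by (auto simp: fps_eq_iff intro!: exI[of _ 1] subdegree_leI)
  moreover have "subdegree ?N \<ge> 1"
    by (rule subdegree_geI) (auto simp: fps_eq_iff intro!: exI[of _ 1])
  ultimately have "?N / ?D * ?D = ?N" by (intro fps_times_divide_eq) auto
  hence "?D * bernpoly_egf a = ?N" by (simp add: bernpoly_egf_def mult.commute)
  hence "fps_exp (- a) * ?D * bernpoly_egf a = fps_X * (fps_exp (- a) * fps_exp a)"
    by (simp add: mult_ac)
  also have "fps_exp (- a) * fps_exp a = 1" by (simp flip: fps_exp_add_mult)
  finally show ?thesis by simp
qed

lemma bernpoly_egf_nth_0: "bernpoly_egf a $ 0 = 1"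
  using arg_cong[OF exp_times_exp_minus_one_times_bernpoly_egf[of a], of "\<lambda>f. f $ 1"]
  by (simp add: fps_mult_nth)

lemma gregL_nth_0: "gregL a $ 0 = 0"
  by (simp add: gregL_def fps_inv_def)

lemma gregL_fixpoint: "gregL a = fps_X * (bernpoly_egf a oo gregL a)"
proof -
  let ?g = "fps_exp (- a) * (fps_exp 1 - 1) :: real fps"
  have "?g oo gregL a = fps_X"
    unfolding gregL_def by (intro fps_inv_right) (simp_all add: fps_mult_nth)
  moreover have "gregL a = (?g * bernpoly_egf a) oo gregL a"
    by (simp add: exp_times_exp_minus_one_times_bernpoly_egf gregL_nth_0)
  ultimately show ?thesis
    using fps_compose_mult_distrib[OF gregL_nth_0] by metis
qed

lemma fps_power_Suc_nth_of_fixpoint: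
  fixes L f :: "'a::idom fps"
  assumes L0: "L $ 0 = 0" and L_fixpoint: "L = fps_X * (f oo L)"
  shows "(L ^ Suc k) $ Suc n = (\<Sum>i=0..n. (if k \<le> i then f $ (i - k) else 0) * (L ^ i) $ n)"
proof -
  have "L ^ Suc k = fps_X * (f oo L) * (fps_X ^ k oo L)"
    using fps_compose_power[OF L0, of fps_X k] L0 L_fixpoint by simp
  also have "\<dots> = fps_X * ((fps_X ^ k * f) oo L)"
    by (simp add: fps_compose_mult_distrib[OF L0] mult_ac)
  finally show ?thesis
    by (auto simp: fps_compose_nth fps_X_power_mult_nth intro!: sum.cong)
qed

text \<open>Reading each letter x as a node with x children, lukasiewicz k xs says that xs is the
  preorder arity sequence of a forest of k plane trees.\<close>

fun lukasiewicz :: "nat \<Rightarrow> nat list \<Rightarrow> bool" where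
  "lukasiewicz k [] \<longleftrightarrow> k = 0"
| "lukasiewicz k (x # xs) \<longleftrightarrow> 1 \<le> k \<and> lukasiewicz (k - 1 + x) xs"

lemma lukasiewicz_iff:
  "lukasiewicz k xs \<longleftrightarrow>
     k + sum_list xs = length xs \<and> (\<forall>j < length xs. j < k + sum_list (take j xs))"
proof (induction xs arbitrary: k)
  case (Cons x xs)
  have "(\<forall>j < length (x # xs). j < k + sum_list (take j (x # xs))) \<longleftrightarrow>
        1 \<le> k \<and> (\<forall>j < length xs. j < k - 1 + x + sum_list (take j xs))"
    by (auto simp: less_Suc_eq_0_disj all_conj_distrib)
  then show ?case using Cons.IH by auto
qed simp

lemma lukasiewicz_snoc_last_eq_0: "lukasiewicz k (xs @ [y]) \<Longrightarrow> y = 0"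
  by (auto simp: lukasiewicz_iff dest!: spec[of _ "length xs"])

definition lukasiewicz_words :: "nat \<Rightarrow> nat \<Rightarrow> nat list set" where
  "lukasiewicz_words n k = {xs. length xs = n \<and> lukasiewicz k xs}"

lemma finite_lukasiewicz_words: "finite (lukasiewicz_words n k)"
proof (rule finite_subset)
  show "lukasiewicz_words n k \<subseteq> {xs. set xs \<subseteq> {..n} \<and> length xs = n}"
    by (auto simp: lukasiewicz_words_def lukasiewicz_iff
             dest!: member_le_sum_list[where 'a = nat])
qed (simp add: finite_lists_length_eq)

lemma lukasiewicz_words_Suc_Suc:
  "lukasiewicz_words (Suc n) (Suc k) = (\<Union>i\<in>{k..n}. (#) (i - k) ` lukasiewicz_words n i)"
proof -
  have "k + x \<le> n" if "lukasiewicz (k + x) xs" "length xs = n" for x xs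
    using that by (simp add: lukasiewicz_iff)
  then show ?thesis
    by (fastforce simp: lukasiewicz_words_def length_Suc_conv image_iff)
qed

definition lukasiewicz_weight :: "(nat \<Rightarrow> 'a::comm_semiring_1) \<Rightarrow> nat \<Rightarrow> nat \<Rightarrow> 'a" where
  "lukasiewicz_weight b n k = (\<Sum>xs\<in>lukasiewicz_words n k. \<Prod>x\<leftarrow>xs. b x)"

lemma lukasiewicz_weight_0: "lukasiewicz_weight b 0 k = (if k = 0 then 1 else 0)"
proof -
  have "lukasiewicz_words 0 k = (if k = 0 then {[]} else {})"
    by (auto simp: lukasiewicz_words_def)
  then show ?thesis by (simp add: lukasiewicz_weight_def)
qed

lemma lukasiewicz_weight_Suc_0: "lukasiewicz_weight b (Suc n) 0 = 0"
proof -
  have "lukasiewicz_words (Suc n) 0 = {}"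
    by (auto simp: lukasiewicz_words_def length_Suc_conv)
  then show ?thesis by (simp add: lukasiewicz_weight_def)
qed

lemma lukasiewicz_weight_Suc_Suc:
  "lukasiewicz_weight b (Suc n) (Suc k) =
     (\<Sum>i=0..n. (if k \<le> i then b (i - k) else 0) * lukasiewicz_weight b n i)"
proof -
  have "lukasiewicz_weight b (Suc n) (Suc k) = (\<Sum>i=k..n. b (i - k) * lukasiewicz_weight b n i)"
    unfolding lukasiewicz_weight_def lukasiewicz_words_Suc_Suc
    by (subst sum.UNION_disjoint)
       (auto simp: finite_lukasiewicz_words sum.reindex sum_distrib_left)
  also have "\<dots> = (\<Sum>i\<in>{0..n} \<inter> {i. k \<le> i}. b (i - k) * lukasiewicz_weight b n i)"
    by (intro sum.cong) auto
  also have "\<dots> = (\<Sum>i=0..n. (if k \<le> i then b (i - k) else 0) * lukasiewicz_weight b n i)"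
    by (subst sum.inter_restrict) (auto intro!: sum.cong)
  finally show ?thesis .
qed

lemma fps_power_nth_of_fixpoint:
  fixes L f :: "'a::idom fps"
  assumes "L $ 0 = 0" and "L = fps_X * (f oo L)"
  shows "(L ^ k) $ n = lukasiewicz_weight (($) f) n k"
proof (induction n arbitrary: k)
  case 0
  then show ?case using assms(1) by (simp add: fps_nth_power_0 lukasiewicz_weight_0)
next
  case (Suc n)
  then show ?case
    using fps_power_Suc_nth_of_fixpoint[OF assms]
    by (cases k) (simp_all add: lukasiewicz_weight_Suc_0 lukasiewicz_weight_Suc_Suc)
qed

lemma mem_S_set_iff: "ns \<in> S_set r \<longleftrightarrow> length ns = r \<and> lukasiewicz 1 (ns @ [0])"
proof (cases "length ns = r \<and> sum_list ns = r")
  case False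
  then show ?thesis by (auto simp: S_set_def lukasiewicz_iff)
next
  case True
  define Q where "Q j \<longleftrightarrow> sum_list (drop j ns) \<le> r - j" for j
  have prefix_iff: "j < 1 + sum_list (take j (ns @ [0])) \<longleftrightarrow> Q j" if "j \<le> r" for j
  proof -
    have "sum_list (take j (ns @ [0])) = sum_list (take j ns)" using that True by simp
    then show ?thesis
      using that True sum_list_append[of "take j ns" "drop j ns", unfolded append_take_drop_id]
      unfolding Q_def by linarith
  qed
  have "Q 0" "Q r" using True by (simp_all add: Q_def)
  then have "(\<forall>j. 1 \<le> j \<and> j < r \<longrightarrow> Q j) \<longleftrightarrow> (\<forall>j \<le> r. Q j)"
    by (metis less_one linorder_not_le order_le_less)
  with True prefix_iff show ?thesis
    by (simp add: S_set_def lukasiewicz_iff Q_def less_Suc_eq_le)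
qed

lemma lukasiewicz_words_Suc_1: "lukasiewicz_words (Suc r) 1 = (\<lambda>ns. ns @ [0]) ` S_set r"
proof (intro set_eqI iffI)
  fix xs assume xs: "xs \<in> lukasiewicz_words (Suc r) 1"
  then obtain ns y where ns: "xs = ns @ [y]" "length ns = r"
    by (cases xs rule: rev_exhaust) (auto simp: lukasiewicz_words_def)
  with xs have "lukasiewicz 1 (ns @ [y])" by (simp add: lukasiewicz_words_def)
  moreover from this have "y = 0" by (rule lukasiewicz_snoc_last_eq_0)
  ultimately have "ns \<in> S_set r" using ns(2) by (simp add: mem_S_set_iff)
  with ns(1) \<open>y = 0\<close> show "xs \<in> (\<lambda>ns. ns @ [0]) ` S_set r" by blast
qed (auto simp: lukasiewicz_words_def mem_S_set_iff)

theorem theorem6p7: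
  fixes r :: nat and a :: real
  assumes "r \<ge> 1"
  shows "(-1) ^ r * (\<Sum>ns\<in>S_set r. \<Prod>n\<leftarrow>ns. bernpoly n a / fact n)
           = (-1) ^ r * lambda_coeff (r + 1) a"
proof -
  let ?b = "($) (bernpoly_egf a)"
  have inj_on_snoc_0: "inj_on (\<lambda>ns. ns @ [0 :: nat]) (S_set r)"
    by (rule inj_onI) simp
  have "(\<Sum>ns\<in>S_set r. \<Prod>n\<leftarrow>ns. bernpoly n a / fact n) = (\<Sum>ns\<in>S_set r. \<Prod>n\<leftarrow>ns @ [0]. ?b n)"
    by (simp add: bernpoly_def bernpoly_egf_nth_0)
  also have "\<dots> = (\<Sum>xs\<in>(\<lambda>ns. ns @ [0]) ` S_set r. \<Prod>n\<leftarrow>xs. ?b n)"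
    by (simp only: sum.reindex[OF inj_on_snoc_0] comp_def)
  also have "\<dots> = lukasiewicz_weight ?b (Suc r) 1"
    by (simp only: lukasiewicz_weight_def lukasiewicz_words_Suc_1)
  also have "\<dots> = lambda_coeff (r + 1) a"
    using fps_power_nth_of_fixpoint[OF gregL_nth_0 gregL_fixpoint, where k = 1 and n = "Suc r"]
    by (simp add: lambda_coeff_def)
  finally show ?thesis by simp
qed

end
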